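(* Let $(F\colon\mathcal C\to\mathcal D,U\colon\mathcal D\to\mathcal C)$ be a comonoidal adjunction between left (resp. right) closed monoidal categories. Then $(F,U)$ is a left (resp. right) Hopf adjunction if and only if $U$ (viewed as a strong monoidal functor) is left (resp. right) closed.
   Context: Monoidal categories are strict. A comonoidal adjunction is an adjunction $(F,U)$ with unit $\eta$, counit $\varepsilon$ between monoidal categories where $F,U$ are comonoidal functors (structure $F_2(X,Y)\colon F(X\otimes Y)\to FX\otimes FY$, $F_0\colon F\mathbb 1\to\mathbb 1$) and $\eta,\varepsilon$ are comonoidal; then $U$ is strong comonoidal, hence strong monoidal via the inverse structure maps. Hopf operators: $\mathbb H^l_{c,d}=(Fc\otimes\varepsilon_d)F_2(c,Ud)\colon F(c\otimes Ud)\to Fc\otimes d$, $\mathbb H^r_{d,c}=(\varepsilon_d\otimes Fc)F_2(Ud,c)\colon F(Ud\otimes c)\to d\otimes Fc$; the adjunction is left (resp. right) Hopf if $\mathbb H^l$ (resp. $\mathbb H^r$) is invertible. A monoidal category is left closed if each $?\otimes X$ has a right adjoint $[X,?]^l$ with counit $\mathrm{ev}^X_Y\colon[X,Y]^l\otimes X\to Y$, right closed if each $X\otimes ?$ has a right adjoint $[X,?]^r$ with counit $X\otimes[X,Y]^r\to Y$. A strong monoidal functor $U$ (structure $U_2(A,B)\colon UA\otimes UB\to U(A\otimes B)$) is left closed if the canonical morphisms $U[X,Y]^l\to[UX,UY]^l$ corresponding to $U(\mathrm{ev}^X_Y)U_2([X,Y]^l,X)$ are isomorphisms; right closed is defined analogously.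 *)

theory Defs
  imports Main
begin

text \<open>Strict monoidal categories, given by explicit data: a set of objects,
  hom-sets, composition (cmp g f = g after f), identities, tensor on objects
  and on morphisms, and the unit object.\<close>

record ('o, 'm) mcat =
  ob   :: "'o set"
  hom  :: "'o \<Rightarrow> 'o \<Rightarrow> 'm set"
  cmp  :: "'m \<Rightarrow> 'm \<Rightarrow> 'm"
  idt  :: "'o \<Rightarrow> 'm"
  ten  :: "'o \<Rightarrow> 'o \<Rightarrow> 'o"
  tenm :: "'m \<Rightarrow> 'm \<Rightarrow> 'm"
  munit :: "'o"

definition category :: "('o, 'm) mcat \<Rightarrow> bool" where
  "category C \<longleftrightarrow>
     (\<forall>a b. (a \<notin> ob C \<or> b \<notin> ob C) \<longrightarrow> hom C a b = {}) \<and>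
     (\<forall>a\<in>ob C. idt C a \<in> hom C a a) \<and>
     (\<forall>a b c f g. f \<in> hom C a b \<longrightarrow> g \<in> hom C b c \<longrightarrow> cmp C g f \<in> hom C a c) \<and>
     (\<forall>a b f. f \<in> hom C a b \<longrightarrow> cmp C (idt C b) f = f \<and> cmp C f (idt C a) = f) \<and>
     (\<forall>a b c d f g h. f \<in> hom C a b \<longrightarrow> g \<in> hom C b c \<longrightarrow> h \<in> hom C c d \<longrightarrow>
        cmp C h (cmp C g f) = cmp C (cmp C h g) f)"

definition strict_monoidal :: "('o, 'm) mcat \<Rightarrow> bool" where
  "strict_monoidal C \<longleftrightarrow>
     category C \<and> munit C \<in> ob C \<and>
     (\<forall>a\<in>ob C. \<forall>b\<in>ob C. ten C a b \<in> ob C) \<and>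
     (\<forall>a b c d f g. f \<in> hom C a b \<longrightarrow> g \<in> hom C c d \<longrightarrow>
        tenm C f g \<in> hom C (ten C a c) (ten C b d)) \<and>
     (\<forall>a\<in>ob C. \<forall>b\<in>ob C. tenm C (idt C a) (idt C b) = idt C (ten C a b)) \<and>
     (\<forall>a b c a' b' c' f g f' g'. f \<in> hom C a b \<longrightarrow> g \<in> hom C b c \<longrightarrow>
        f' \<in> hom C a' b' \<longrightarrow> g' \<in> hom C b' c' \<longrightarrow>
        tenm C (cmp C g f) (cmp C g' f') = cmp C (tenm C g g') (tenm C f f')) \<and>
     (\<forall>a\<in>ob C. \<forall>b\<in>ob C. \<forall>c\<in>ob C. ten C (ten C a b) c = ten C a (ten C b c)) \<and>
     (\<forall>a\<in>ob C. ten C (munit C) a = a \<and> ten C a (munit C) = a) \<and>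
     (\<forall>a b c d e k f g h. f \<in> hom C a b \<longrightarrow> g \<in> hom C c d \<longrightarrow> h \<in> hom C e k \<longrightarrow>
        tenm C (tenm C f g) h = tenm C f (tenm C g h)) \<and>
     (\<forall>a b f. f \<in> hom C a b \<longrightarrow>
        tenm C (idt C (munit C)) f = f \<and> tenm C f (idt C (munit C)) = f)"

definition "functor" ::
  "('a, 'b) mcat \<Rightarrow> ('c, 'd) mcat \<Rightarrow> ('a \<Rightarrow> 'c) \<Rightarrow> ('b \<Rightarrow> 'd) \<Rightarrow> bool" where
  "functor C D Fo Fm \<longleftrightarrow>
     (\<forall>a\<in>ob C. Fo a \<in> ob D) \<and>
     (\<forall>a b f. f \<in> hom C a b \<longrightarrow> Fm f \<in> hom D (Fo a) (Fo b)) \<and>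
     (\<forall>a\<in>ob C. Fm (idt C a) = idt D (Fo a)) \<and>
     (\<forall>a b c f g. f \<in> hom C a b \<longrightarrow> g \<in> hom C b c \<longrightarrow>
        Fm (cmp C g f) = cmp D (Fm g) (Fm f))"

definition nat_trans ::
  "('a, 'b) mcat \<Rightarrow> ('c, 'd) mcat \<Rightarrow> ('a \<Rightarrow> 'c) \<Rightarrow> ('b \<Rightarrow> 'd) \<Rightarrow>
   ('a \<Rightarrow> 'c) \<Rightarrow> ('b \<Rightarrow> 'd) \<Rightarrow> ('a \<Rightarrow> 'd) \<Rightarrow> bool" where
  "nat_trans C D Go Gm Ho Hm \<theta> \<longleftrightarrow>
     (\<forall>a\<in>ob C. \<theta> a \<in> hom D (Go a) (Ho a)) \<and>
     (\<forall>a b f. f \<in> hom C a b \<longrightarrow> cmp D (\<theta> b) (Gm f) = cmp D (Hm f) (\<theta> a))"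

definition comonoidal_functor ::
  "('a, 'b) mcat \<Rightarrow> ('c, 'd) mcat \<Rightarrow> ('a \<Rightarrow> 'c) \<Rightarrow> ('b \<Rightarrow> 'd) \<Rightarrow>
   ('a \<Rightarrow> 'a \<Rightarrow> 'd) \<Rightarrow> 'd \<Rightarrow> bool" where
  "comonoidal_functor C D Fo Fm F2 F0 \<longleftrightarrow>
     functor C D Fo Fm \<and>
     (\<forall>x\<in>ob C. \<forall>y\<in>ob C. F2 x y \<in> hom D (Fo (ten C x y)) (ten D (Fo x) (Fo y))) \<and>
     F0 \<in> hom D (Fo (munit C)) (munit D) \<and>
     (\<forall>x x' y y' f g. f \<in> hom C x x' \<longrightarrow> g \<in> hom C y y' \<longrightarrow>
        cmp D (F2 x' y') (Fm (tenm C f g)) = cmp D (tenm D (Fm f) (Fm g)) (F2 x y)) \<and>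
     (\<forall>x\<in>ob C. \<forall>y\<in>ob C. \<forall>z\<in>ob C.
        cmp D (tenm D (F2 x y) (idt D (Fo z))) (F2 (ten C x y) z) =
        cmp D (tenm D (idt D (Fo x)) (F2 y z)) (F2 x (ten C y z))) \<and>
     (\<forall>x\<in>ob C.
        cmp D (tenm D F0 (idt D (Fo x))) (F2 (munit C) x) = idt D (Fo x) \<and>
        cmp D (tenm D (idt D (Fo x)) F0) (F2 x (munit C)) = idt D (Fo x))"

definition comonoidal_nat_trans ::
  "('a, 'b) mcat \<Rightarrow> ('c, 'd) mcat \<Rightarrow>
   ('a \<Rightarrow> 'c) \<Rightarrow> ('b \<Rightarrow> 'd) \<Rightarrow> ('a \<Rightarrow> 'a \<Rightarrow> 'd) \<Rightarrow> 'd \<Rightarrow>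
   ('a \<Rightarrow> 'c) \<Rightarrow> ('b \<Rightarrow> 'd) \<Rightarrow> ('a \<Rightarrow> 'a \<Rightarrow> 'd) \<Rightarrow> 'd \<Rightarrow>
   ('a \<Rightarrow> 'd) \<Rightarrow> bool" where
  "comonoidal_nat_trans C D Go Gm G2 G0 Ho Hm H2 H0 \<theta> \<longleftrightarrow>
     nat_trans C D Go Gm Ho Hm \<theta> \<and>
     (\<forall>x\<in>ob C. \<forall>y\<in>ob C.
        cmp D (H2 x y) (\<theta> (ten C x y)) = cmp D (tenm D (\<theta> x) (\<theta> y)) (G2 x y)) \<and>
     cmp D H0 (\<theta> (munit C)) = G0"

text \<open>Comonoidal adjunction (F,U) with unit \<eta> : Id \<Rightarrow> UF and counit \<epsilon> : FU \<Rightarrow> Id;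
  the identity functors carry the identity comonoidal structure and composites
  the composite comonoidal structure.\<close>

definition comonoidal_adjunction ::
  "('a, 'b) mcat \<Rightarrow> ('c, 'd) mcat \<Rightarrow>
   ('a \<Rightarrow> 'c) \<Rightarrow> ('b \<Rightarrow> 'd) \<Rightarrow> ('a \<Rightarrow> 'a \<Rightarrow> 'd) \<Rightarrow> 'd \<Rightarrow>
   ('c \<Rightarrow> 'a) \<Rightarrow> ('d \<Rightarrow> 'b) \<Rightarrow> ('c \<Rightarrow> 'c \<Rightarrow> 'b) \<Rightarrow> 'b \<Rightarrow>
   ('a \<Rightarrow> 'b) \<Rightarrow> ('c \<Rightarrow> 'd) \<Rightarrow> bool" where
  "comonoidal_adjunction C D Fo Fm F2 F0 Uo Um U2 U0 \<eta> \<epsilon> \<longleftrightarrow>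
     strict_monoidal C \<and> strict_monoidal D \<and>
     comonoidal_functor C D Fo Fm F2 F0 \<and>
     comonoidal_functor D C Uo Um U2 U0 \<and>
     comonoidal_nat_trans C C
       (\<lambda>x. x) (\<lambda>f. f) (\<lambda>x y. idt C (ten C x y)) (idt C (munit C))
       (\<lambda>x. Uo (Fo x)) (\<lambda>f. Um (Fm f))
       (\<lambda>x y. cmp C (U2 (Fo x) (Fo y)) (Um (F2 x y))) (cmp C U0 (Um F0)) \<eta> \<and>
     comonoidal_nat_trans D D
       (\<lambda>x. Fo (Uo x)) (\<lambda>f. Fm (Um f))
       (\<lambda>x y. cmp D (F2 (Uo x) (Uo y)) (Fm (U2 x y))) (cmp D F0 (Fm U0))
       (\<lambda>x. x) (\<lambda>f. f) (\<lambda>x y. idt D (ten D x y)) (idt D (munit D)) \<epsilon> \<and>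
     (\<forall>c\<in>ob C. cmp D (\<epsilon> (Fo c)) (Fm (\<eta> c)) = idt D (Fo c)) \<and>
     (\<forall>d\<in>ob D. cmp C (Um (\<epsilon> d)) (\<eta> (Uo d)) = idt C (Uo d))"

definition iso_in :: "('o, 'm) mcat \<Rightarrow> 'o \<Rightarrow> 'o \<Rightarrow> 'm \<Rightarrow> bool" where
  "iso_in C a b f \<longleftrightarrow> f \<in> hom C a b \<and>
     (\<exists>g\<in>hom C b a. cmp C g f = idt C a \<and> cmp C f g = idt C b)"

definition inverse_arr :: "('o, 'm) mcat \<Rightarrow> 'o \<Rightarrow> 'o \<Rightarrow> 'm \<Rightarrow> 'm" where
  "inverse_arr C a b f =
     (THE g. g \<in> hom C b a \<and> cmp C g f = idt C a \<and> cmp C f g = idt C b)"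

definition left_hopf ::
  "('a, 'b) mcat \<Rightarrow> ('c, 'd) mcat \<Rightarrow>
   ('a \<Rightarrow> 'c) \<Rightarrow> ('a \<Rightarrow> 'a \<Rightarrow> 'd) \<Rightarrow> ('c \<Rightarrow> 'a) \<Rightarrow> ('c \<Rightarrow> 'd) \<Rightarrow> bool" where
  "left_hopf C D Fo F2 Uo \<epsilon> \<longleftrightarrow>
     (\<forall>c\<in>ob C. \<forall>d\<in>ob D.
        iso_in D (Fo (ten C c (Uo d))) (ten D (Fo c) d)
          (cmp D (tenm D (idt D (Fo c)) (\<epsilon> d)) (F2 c (Uo d))))"

definition right_hopf ::
  "('a, 'b) mcat \<Rightarrow> ('c, 'd) mcat \<Rightarrow>
   ('a \<Rightarrow> 'c) \<Rightarrow> ('a \<Rightarrow> 'a \<Rightarrow> 'd) \<Rightarrow> ('c \<Rightarrow> 'a) \<Rightarrow> ('c \<Rightarrow> 'd) \<Rightarrow> bool" where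
  "right_hopf C D Fo F2 Uo \<epsilon> \<longleftrightarrow>
     (\<forall>c\<in>ob C. \<forall>d\<in>ob D.
        iso_in D (Fo (ten C (Uo d) c)) (ten D d (Fo c))
          (cmp D (tenm D (\<epsilon> d) (idt D (Fo c))) (F2 (Uo d) c)))"

text \<open>Closed structures: ih X Y is the internal hom, ev X Y the counit of the
  adjunction, expressed via its universal property.\<close>

definition left_closed :: "('o, 'm) mcat \<Rightarrow> ('o \<Rightarrow> 'o \<Rightarrow> 'o) \<Rightarrow> ('o \<Rightarrow> 'o \<Rightarrow> 'm) \<Rightarrow> bool" where
  "left_closed C ih ev \<longleftrightarrow>
     (\<forall>X\<in>ob C. \<forall>Y\<in>ob C. ih X Y \<in> ob C \<and>
        ev X Y \<in> hom C (ten C (ih X Y) X) Y \<and>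
        (\<forall>A\<in>ob C. \<forall>f\<in>hom C (ten C A X) Y.
           \<exists>!g. g \<in> hom C A (ih X Y) \<and> cmp C (ev X Y) (tenm C g (idt C X)) = f))"

definition right_closed :: "('o, 'm) mcat \<Rightarrow> ('o \<Rightarrow> 'o \<Rightarrow> 'o) \<Rightarrow> ('o \<Rightarrow> 'o \<Rightarrow> 'm) \<Rightarrow> bool" where
  "right_closed C ih ev \<longleftrightarrow>
     (\<forall>X\<in>ob C. \<forall>Y\<in>ob C. ih X Y \<in> ob C \<and>
        ev X Y \<in> hom C (ten C X (ih X Y)) Y \<and>
        (\<forall>A\<in>ob C. \<forall>f\<in>hom C (ten C X A) Y.
           \<exists>!g. g \<in> hom C A (ih X Y) \<and> cmp C (ev X Y) (tenm C (idt C X) g) = f))"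

text \<open>Monoidal structure of U: the inverse of the comonoidal structure U2 A B.\<close>

definition mon_str :: "('a, 'b) mcat \<Rightarrow> ('c, 'd) mcat \<Rightarrow> ('c \<Rightarrow> 'a) \<Rightarrow>
   ('c \<Rightarrow> 'c \<Rightarrow> 'b) \<Rightarrow> 'c \<Rightarrow> 'c \<Rightarrow> 'b" where
  "mon_str C D Uo U2 A B =
     inverse_arr C (Uo (ten D A B)) (ten C (Uo A) (Uo B)) (U2 A B)"

definition left_closed_functor ::
  "('a, 'b) mcat \<Rightarrow> ('c, 'd) mcat \<Rightarrow> ('c \<Rightarrow> 'a) \<Rightarrow> ('d \<Rightarrow> 'b) \<Rightarrow> ('c \<Rightarrow> 'c \<Rightarrow> 'b) \<Rightarrow>
   ('a \<Rightarrow> 'a \<Rightarrow> 'a) \<Rightarrow> ('a \<Rightarrow> 'a \<Rightarrow> 'b) \<Rightarrow> ('c \<Rightarrow> 'c \<Rightarrow> 'c) \<Rightarrow> ('c \<Rightarrow> 'c \<Rightarrow> 'd) \<Rightarrow> bool" where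
  "left_closed_functor C D Uo Um U2 ihC evC ihD evD \<longleftrightarrow>
     (\<forall>X\<in>ob D. \<forall>Y\<in>ob D.
        iso_in C (Uo (ihD X Y)) (ihC (Uo X) (Uo Y))
          (THE g. g \<in> hom C (Uo (ihD X Y)) (ihC (Uo X) (Uo Y)) \<and>
             cmp C (evC (Uo X) (Uo Y)) (tenm C g (idt C (Uo X))) =
             cmp C (Um (evD X Y)) (mon_str C D Uo U2 (ihD X Y) X)))"

definition right_closed_functor ::
  "('a, 'b) mcat \<Rightarrow> ('c, 'd) mcat \<Rightarrow> ('c \<Rightarrow> 'a) \<Rightarrow> ('d \<Rightarrow> 'b) \<Rightarrow> ('c \<Rightarrow> 'c \<Rightarrow> 'b) \<Rightarrow>
   ('a \<Rightarrow> 'a \<Rightarrow> 'a) \<Rightarrow> ('a \<Rightarrow> 'a \<Rightarrow> 'b) \<Rightarrow> ('c \<Rightarrow> 'c \<Rightarrow> 'c) \<Rightarrow> ('c \<Rightarrow> 'c \<Rightarrow> 'd) \<Rightarrow> bool" where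
  "right_closed_functor C D Uo Um U2 ihC evC ihD evD \<longleftrightarrow>
     (\<forall>X\<in>ob D. \<forall>Y\<in>ob D.
        iso_in C (Uo (ihD X Y)) (ihC (Uo X) (Uo Y))
          (THE g. g \<in> hom C (Uo (ihD X Y)) (ihC (Uo X) (Uo Y)) \<and>
             cmp C (evC (Uo X) (Uo Y)) (tenm C (idt C (Uo X)) g) =
             cmp C (Um (evD X Y)) (mon_str C D Uo U2 X (ihD X Y))))"

end

theory Submission imports Defs begin

(* For c in C and d, e in D both conditions of the theorem are invertibility conditions, and by
   the Yoneda principle a morphism h is invertible iff composing with h is a bijection on every
   hom-set.  Being left Hopf therefore means that precomposition with the Hopf operator
     hopf_l c d : F(c \<otimes> Ud) \<rightarrow> Fc \<otimes> d
   is bijective on Hom(Fc \<otimes> d, e), and U being left closed means that postcomposition with the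
   comparison morphism  kap d e : U[d,e] \<rightarrow> [Ud,Ue]  is bijective on Hom(c, U[d,e]).  The two
   closed structures and the adjunction give bijections
     Hom(c, U[d,e]) \<cong> Hom(Fc, [d,e]) \<cong> Hom(Fc \<otimes> d, e),
     Hom(c, [Ud,Ue]) \<cong> Hom(c \<otimes> Ud, Ue) \<cong> Hom(F(c \<otimes> Ud), e),
   and the central computation (lemma hopf_transpose) shows that they intertwine postcomposition
   with kap d e and precomposition with hopf_l c d; hence one is bijective iff the other is. *)

lemma cat_hom_ob: "category X \<Longrightarrow> f \<in> hom X a b \<Longrightarrow> a \<in> ob X \<and> b \<in> ob X"
  unfolding category_def by (elim conjE) blast
lemma cat_id: "category X \<Longrightarrow> a \<in> ob X \<Longrightarrow> idt X a \<in> hom X a a"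
  unfolding category_def by (elim conjE) blast
lemma cat_comp: "category X \<Longrightarrow> f \<in> hom X a b \<Longrightarrow> g \<in> hom X b c \<Longrightarrow> cmp X g f \<in> hom X a c"
  unfolding category_def by (elim conjE) blast
lemma cat_idl: "category X \<Longrightarrow> f \<in> hom X a b \<Longrightarrow> cmp X (idt X b) f = f"
  unfolding category_def by (elim conjE) blast
lemma cat_idr: "category X \<Longrightarrow> f \<in> hom X a b \<Longrightarrow> cmp X f (idt X a) = f"
  unfolding category_def by (elim conjE) blast
lemma cat_assoc: "category X \<Longrightarrow> f \<in> hom X a b \<Longrightarrow> g \<in> hom X b c \<Longrightarrow> h \<in> hom X c d \<Longrightarrow>
   cmp X h (cmp X g f) = cmp X (cmp X h g) f"
  unfolding category_def by (elim conjE) blast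

lemma sm_cat: "strict_monoidal X \<Longrightarrow> category X"
  unfolding strict_monoidal_def by (elim conjE) blast
lemma sm_ten_ob: "strict_monoidal X \<Longrightarrow> a \<in> ob X \<Longrightarrow> b \<in> ob X \<Longrightarrow> ten X a b \<in> ob X"
  unfolding strict_monoidal_def by (elim conjE) blast
lemma sm_tenm: "strict_monoidal X \<Longrightarrow> f \<in> hom X a b \<Longrightarrow> g \<in> hom X c d \<Longrightarrow>
   tenm X f g \<in> hom X (ten X a c) (ten X b d)"
  unfolding strict_monoidal_def by (elim conjE) blast
lemma sm_ten_id: "strict_monoidal X \<Longrightarrow> a \<in> ob X \<Longrightarrow> b \<in> ob X \<Longrightarrow>
   tenm X (idt X a) (idt X b) = idt X (ten X a b)"
  unfolding strict_monoidal_def by (elim conjE) blast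
lemma sm_inter: "strict_monoidal X \<Longrightarrow> f \<in> hom X a b \<Longrightarrow> g \<in> hom X b c \<Longrightarrow>
        f' \<in> hom X a' b' \<Longrightarrow> g' \<in> hom X b' c' \<Longrightarrow>
        tenm X (cmp X g f) (cmp X g' f') = cmp X (tenm X g g') (tenm X f f')"
  unfolding strict_monoidal_def by (elim conjE) blast

lemma fun_ob: "functor X Y Fo Fm \<Longrightarrow> a \<in> ob X \<Longrightarrow> Fo a \<in> ob Y"
  unfolding functor_def by (elim conjE) blast
lemma fun_hom: "functor X Y Fo Fm \<Longrightarrow> f \<in> hom X a b \<Longrightarrow> Fm f \<in> hom Y (Fo a) (Fo b)"
  unfolding functor_def by (elim conjE) blast
lemma fun_id: "functor X Y Fo Fm \<Longrightarrow> a \<in> ob X \<Longrightarrow> Fm (idt X a) = idt Y (Fo a)"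
  unfolding functor_def by (elim conjE) blast
lemma fun_comp: "functor X Y Fo Fm \<Longrightarrow> f \<in> hom X a b \<Longrightarrow> g \<in> hom X b c \<Longrightarrow>
   Fm (cmp X g f) = cmp Y (Fm g) (Fm f)"
  unfolding functor_def by (elim conjE) blast

subsection \<open>Isomorphisms and the Yoneda criteria\<close>

text \<open>Two-sided inverses are unique, so inverse_arr returns any given inverse.\<close>
lemma inverse_arr_eq:
  assumes X: "category X" and f: "f \<in> hom X a b" and g: "g \<in> hom X b a"
    and gf: "cmp X g f = idt X a" and fg: "cmp X f g = idt X b"
  shows "inverse_arr X a b f = g"
  unfolding inverse_arr_def
proof (rule the_equality)
  show "g \<in> hom X b a \<and> cmp X g f = idt X a \<and> cmp X f g = idt X b" using g gf fg by blast
next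
  fix g' assume g': "g' \<in> hom X b a \<and> cmp X g' f = idt X a \<and> cmp X f g' = idt X b"
  have "g' = cmp X g' (cmp X f g)" using fg cat_idr[OF X] g' by metis
  also have "\<dots> = cmp X (cmp X g' f) g" using cat_assoc[OF X g f] g' by blast
  also have "\<dots> = g" using g' cat_idl[OF X g] by simp
  finally show "g' = g" .
qed

lemma iso_post:
  assumes X: "category X" and h: "h \<in> hom X a b"
  shows "iso_in X a b h \<longleftrightarrow> (\<forall>z\<in>ob X. bij_betw (\<lambda>k. cmp X h k) (hom X z a) (hom X z b))"
proof
  assume "iso_in X a b h"
  then obtain g where g: "g \<in> hom X b a" "cmp X g h = idt X a" "cmp X h g = idt X b"
    unfolding iso_in_def by blast
  show "\<forall>z\<in>ob X. bij_betw (\<lambda>k. cmp X h k) (hom X z a) (hom X z b)"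
  proof
    fix z
    show "bij_betw (\<lambda>k. cmp X h k) (hom X z a) (hom X z b)"
    proof (rule bij_betw_byWitness[where f'="\<lambda>k. cmp X g k"])
      show "\<forall>k\<in>hom X z a. cmp X g (cmp X h k) = k"
        using g h X by (metis cat_assoc cat_idl)
      show "\<forall>k\<in>hom X z b. cmp X h (cmp X g k) = k"
        using g h X by (metis cat_assoc cat_idl)
      show "(\<lambda>k. cmp X h k) ` hom X z a \<subseteq> hom X z b" using h X by (blast intro: cat_comp)
      show "(\<lambda>k. cmp X g k) ` hom X z b \<subseteq> hom X z a" using g X by (blast intro: cat_comp)
    qed
  qed
next
  assume bij: "\<forall>z\<in>ob X. bij_betw (\<lambda>k. cmp X h k) (hom X z a) (hom X z b)"
  have ab: "a \<in> ob X" "b \<in> ob X" using cat_hom_ob[OF X h] by auto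
  (* Surjectivity at z = b yields a right inverse g; injectivity at z = a makes it two-sided. *)
  have "idt X b \<in> (\<lambda>k. cmp X h k) ` hom X b a"
    using bij ab cat_id[OF X] unfolding bij_betw_def by blast
  then obtain g where g: "g \<in> hom X b a" "cmp X h g = idt X b" by auto
  have inj: "inj_on (\<lambda>k. cmp X h k) (hom X a a)" using bij ab unfolding bij_betw_def by blast
  have "cmp X h (cmp X g h) = cmp X h (idt X a)"
    using g h X by (metis cat_assoc cat_idl cat_idr)
  then have "cmp X g h = idt X a"
    using inj cat_comp[OF X h g(1)] cat_id[OF X ab(1)] unfolding inj_on_def by blast
  then show "iso_in X a b h" unfolding iso_in_def using g h by blast
qed

text \<open>The opposite category, used to obtain the dual Yoneda criterion.\<close>
definition opc :: "('o, 'm) mcat \<Rightarrow> ('o, 'm) mcat" where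
  "opc X = X\<lparr>hom := \<lambda>a b. hom X b a, cmp := \<lambda>g f. cmp X f g\<rparr>"

lemma opc_simps [simp]:
  "ob (opc X) = ob X" "hom (opc X) a b = hom X b a" "cmp (opc X) g f = cmp X f g"
  "idt (opc X) = idt X"
  unfolding opc_def by simp_all

lemma category_opc: "category X \<Longrightarrow> category (opc X)"
  unfolding category_def by simp metis

lemma iso_in_opc: "iso_in (opc X) a b h \<longleftrightarrow> iso_in X b a h"
  unfolding iso_in_def by auto

lemma iso_pre:
  assumes X: "category X" and h: "h \<in> hom X a b"
  shows "iso_in X a b h \<longleftrightarrow> (\<forall>z\<in>ob X. bij_betw (\<lambda>k. cmp X k h) (hom X b z) (hom X a z))"
  using iso_post[of "opc X" h b a] category_opc[OF X] h by (simp add: iso_in_opc)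

lemma left_closed_bij:
  assumes X: "strict_monoidal X" and lc: "left_closed X ih ev"
    and o: "A \<in> ob X" "P \<in> ob X" "Q \<in> ob X"
  shows "bij_betw (\<lambda>g. cmp X (ev P Q) (tenm X g (idt X P)))
           (hom X A (ih P Q)) (hom X (ten X A P) Q)"
proof -
  have ev: "ev P Q \<in> hom X (ten X (ih P Q) P) Q"
    and univ: "\<forall>f\<in>hom X (ten X A P) Q.
                 \<exists>!g. g \<in> hom X A (ih P Q) \<and> cmp X (ev P Q) (tenm X g (idt X P)) = f"
    using lc o unfolding left_closed_def by blast+
  have into: "\<And>g. g \<in> hom X A (ih P Q) \<Longrightarrow>
      cmp X (ev P Q) (tenm X g (idt X P)) \<in> hom X (ten X A P) Q"
    using ev sm_cat[OF X] X o by (meson cat_comp cat_id sm_tenm)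
  show ?thesis unfolding bij_betw_def inj_on_def
  proof (intro conjI ballI impI equalityI subsetI)
    fix g g' assume "g \<in> hom X A (ih P Q)" "g' \<in> hom X A (ih P Q)"
      "cmp X (ev P Q) (tenm X g (idt X P)) = cmp X (ev P Q) (tenm X g' (idt X P))"
    then show "g = g'" using univ into by metis
  qed (use univ into in blast)+
qed

subsection \<open>Comonoidal adjunctions\<close>

locale comonoidal_adj =
  fixes C :: "('a, 'b) mcat" and D :: "('c, 'd) mcat"
    and Fo Fm F2 F0 Uo Um U2 U0 \<eta> \<epsilon>
  assumes adj: "comonoidal_adjunction C D Fo Fm F2 F0 Uo Um U2 U0 \<eta> \<epsilon>"
begin

lemma C_sm: "strict_monoidal C" and D_sm: "strict_monoidal D"
  and F_comon: "comonoidal_functor C D Fo Fm F2 F0"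
  and U_comon: "comonoidal_functor D C Uo Um U2 U0"
  and eta_comon: "comonoidal_nat_trans C C
       (\<lambda>x. x) (\<lambda>f. f) (\<lambda>x y. idt C (ten C x y)) (idt C (munit C))
       (\<lambda>x. Uo (Fo x)) (\<lambda>f. Um (Fm f))
       (\<lambda>x y. cmp C (U2 (Fo x) (Fo y)) (Um (F2 x y))) (cmp C U0 (Um F0)) \<eta>"
  and eps_comon: "comonoidal_nat_trans D D
       (\<lambda>x. Fo (Uo x)) (\<lambda>f. Fm (Um f))
       (\<lambda>x y. cmp D (F2 (Uo x) (Uo y)) (Fm (U2 x y))) (cmp D F0 (Fm U0))
       (\<lambda>x. x) (\<lambda>f. f) (\<lambda>x y. idt D (ten D x y)) (idt D (munit D)) \<epsilon>"
  and triangle_F: "\<And>c. c \<in> ob C \<Longrightarrow> cmp D (\<epsilon> (Fo c)) (Fm (\<eta> c)) = idt D (Fo c)"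
  and triangle_U: "\<And>d. d \<in> ob D \<Longrightarrow> cmp C (Um (\<epsilon> d)) (\<eta> (Uo d)) = idt C (Uo d)"
  using adj unfolding comonoidal_adjunction_def by auto

lemma cC: "category C" using sm_cat[OF C_sm] .
lemma cD: "category D" using sm_cat[OF D_sm] .
lemma F_fun: "functor C D Fo Fm" using F_comon unfolding comonoidal_functor_def by blast
lemma U_fun: "functor D C Uo Um" using U_comon unfolding comonoidal_functor_def by blast

lemma F_ob: "c \<in> ob C \<Longrightarrow> Fo c \<in> ob D" using fun_ob[OF F_fun] .
lemma U_ob: "d \<in> ob D \<Longrightarrow> Uo d \<in> ob C" using fun_ob[OF U_fun] .
lemma F_hom: "f \<in> hom C a b \<Longrightarrow> Fm f \<in> hom D (Fo a) (Fo b)" using fun_hom[OF F_fun] .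
lemma U_hom: "f \<in> hom D a b \<Longrightarrow> Um f \<in> hom C (Uo a) (Uo b)" using fun_hom[OF U_fun] .
lemma C_ten: "a \<in> ob C \<Longrightarrow> b \<in> ob C \<Longrightarrow> ten C a b \<in> ob C" using sm_ten_ob[OF C_sm] .
lemma D_ten: "a \<in> ob D \<Longrightarrow> b \<in> ob D \<Longrightarrow> ten D a b \<in> ob D" using sm_ten_ob[OF D_sm] .

lemma F2_hom: "x \<in> ob C \<Longrightarrow> y \<in> ob C \<Longrightarrow> F2 x y \<in> hom D (Fo (ten C x y)) (ten D (Fo x) (Fo y))"
  using F_comon unfolding comonoidal_functor_def by blast
lemma F2_nat: "f \<in> hom C x x' \<Longrightarrow> g \<in> hom C y y' \<Longrightarrow>
        cmp D (F2 x' y') (Fm (tenm C f g)) = cmp D (tenm D (Fm f) (Fm g)) (F2 x y)"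
  using F_comon unfolding comonoidal_functor_def by blast
lemma U2_hom: "x \<in> ob D \<Longrightarrow> y \<in> ob D \<Longrightarrow> U2 x y \<in> hom C (Uo (ten D x y)) (ten C (Uo x) (Uo y))"
  using U_comon unfolding comonoidal_functor_def by blast
lemma U2_nat: "f \<in> hom D x x' \<Longrightarrow> g \<in> hom D y y' \<Longrightarrow>
        cmp C (U2 x' y') (Um (tenm D f g)) = cmp C (tenm C (Um f) (Um g)) (U2 x y)"
  using U_comon unfolding comonoidal_functor_def by blast

lemma eta_hom: "c \<in> ob C \<Longrightarrow> \<eta> c \<in> hom C c (Uo (Fo c))"
  using eta_comon unfolding comonoidal_nat_trans_def nat_trans_def by blast
lemma eta_nat: "f \<in> hom C a b \<Longrightarrow> cmp C (\<eta> b) f = cmp C (Um (Fm f)) (\<eta> a)"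
  using eta_comon unfolding comonoidal_nat_trans_def nat_trans_def by blast
lemma eps_hom: "d \<in> ob D \<Longrightarrow> \<epsilon> d \<in> hom D (Fo (Uo d)) d"
  using eps_comon unfolding comonoidal_nat_trans_def nat_trans_def by blast
lemma eps_nat: "f \<in> hom D a b \<Longrightarrow> cmp D (\<epsilon> b) (Fm (Um f)) = cmp D f (\<epsilon> a)"
  using eps_comon unfolding comonoidal_nat_trans_def nat_trans_def by blast

lemma eta_tensor:
  assumes "x \<in> ob C" "y \<in> ob C"
  shows "cmp C (cmp C (U2 (Fo x) (Fo y)) (Um (F2 x y))) (\<eta> (ten C x y)) = tenm C (\<eta> x) (\<eta> y)"
proof -
  have "cmp C (cmp C (U2 (Fo x) (Fo y)) (Um (F2 x y))) (\<eta> (ten C x y))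
      = cmp C (tenm C (\<eta> x) (\<eta> y)) (idt C (ten C x y))"
    using eta_comon assms unfolding comonoidal_nat_trans_def by blast
  then show ?thesis
    using cat_idr[OF cC sm_tenm[OF C_sm eta_hom[OF assms(1)] eta_hom[OF assms(2)]]] by simp
qed

lemma eps_tensor:
  assumes "x \<in> ob D" "y \<in> ob D"
  shows "\<epsilon> (ten D x y) = cmp D (tenm D (\<epsilon> x) (\<epsilon> y)) (cmp D (F2 (Uo x) (Uo y)) (Fm (U2 x y)))"
proof -
  have "cmp D (idt D (ten D x y)) (\<epsilon> (ten D x y))
      = cmp D (tenm D (\<epsilon> x) (\<epsilon> y)) (cmp D (F2 (Uo x) (Uo y)) (Fm (U2 x y)))"
    using eps_comon assms unfolding comonoidal_nat_trans_def by blast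
  then show ?thesis using cat_idl[OF cD eps_hom[OF D_ten[OF assms]]] by simp
qed

lemma transpose_bij:
  assumes c: "c \<in> ob C" and e: "e \<in> ob D"
  shows "bij_betw (\<lambda>g. cmp D (\<epsilon> e) (Fm g)) (hom C c (Uo e)) (hom D (Fo c) e)"
    and "bij_betw (\<lambda>h. cmp C (Um h) (\<eta> c)) (hom D (Fo c) e) (hom C c (Uo e))"
proof -
  have ee: "\<epsilon> e \<in> hom D (Fo (Uo e)) e" using eps_hom e .
  have ec: "\<eta> c \<in> hom C c (Uo (Fo c))" using eta_hom c .
  have left: "\<forall>g\<in>hom C c (Uo e). cmp C (Um (cmp D (\<epsilon> e) (Fm g))) (\<eta> c) = g"
  proof
    fix g assume g: "g \<in> hom C c (Uo e)"
    have "cmp C (Um (cmp D (\<epsilon> e) (Fm g))) (\<eta> c) = cmp C (Um (\<epsilon> e)) (cmp C (Um (Fm g)) (\<eta> c))"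
      using fun_comp[OF U_fun F_hom[OF g] ee] cat_assoc[OF cC ec U_hom[OF F_hom[OF g]] U_hom[OF ee]]
      by simp
    also have "\<dots> = cmp C (Um (\<epsilon> e)) (cmp C (\<eta> (Uo e)) g)" using eta_nat[OF g] by simp
    also have "\<dots> = g"
      using cat_assoc[OF cC g eta_hom[OF U_ob[OF e]] U_hom[OF ee]] triangle_U[OF e]
        cat_idl[OF cC g] by simp
    finally show "cmp C (Um (cmp D (\<epsilon> e) (Fm g))) (\<eta> c) = g" .
  qed
  have right: "\<forall>h\<in>hom D (Fo c) e. cmp D (\<epsilon> e) (Fm (cmp C (Um h) (\<eta> c))) = h"
  proof
    fix h assume h: "h \<in> hom D (Fo c) e"
    have "cmp D (\<epsilon> e) (Fm (cmp C (Um h) (\<eta> c))) = cmp D (cmp D (\<epsilon> e) (Fm (Um h))) (Fm (\<eta> c))"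
      using fun_comp[OF F_fun ec U_hom[OF h]] cat_assoc[OF cD F_hom[OF ec] F_hom[OF U_hom[OF h]] ee]
      by simp
    also have "\<dots> = cmp D (cmp D h (\<epsilon> (Fo c))) (Fm (\<eta> c))" using eps_nat[OF h] by simp
    also have "\<dots> = h"
      using cat_assoc[OF cD F_hom[OF ec] eps_hom[OF F_ob[OF c]] h] triangle_F[OF c]
        cat_idr[OF cD h] by simp
    finally show "cmp D (\<epsilon> e) (Fm (cmp C (Um h) (\<eta> c))) = h" .
  qed
  have img1: "(\<lambda>g. cmp D (\<epsilon> e) (Fm g)) ` hom C c (Uo e) \<subseteq> hom D (Fo c) e"
    using F_hom ee cat_comp[OF cD] by blast
  have img2: "(\<lambda>h. cmp C (Um h) (\<eta> c)) ` hom D (Fo c) e \<subseteq> hom C c (Uo e)"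
    using U_hom ec cat_comp[OF cC] by blast
  show "bij_betw (\<lambda>g. cmp D (\<epsilon> e) (Fm g)) (hom C c (Uo e)) (hom D (Fo c) e)"
    by (rule bij_betw_byWitness[OF left right img1 img2])
  show "bij_betw (\<lambda>h. cmp C (Um h) (\<eta> c)) (hom D (Fo c) e) (hom C c (Uo e))"
    by (rule bij_betw_byWitness[OF right left img2 img1])
qed

text \<open>The monoidal structure of U, written explicitly as the mate of the comonoidal structure
  of F:  UA \<otimes> UB \<rightarrow> UF(UA \<otimes> UB) \<rightarrow> U(FUA \<otimes> FUB) \<rightarrow> U(A \<otimes> B).
  It is the inverse of U2 A B, which shows that U is strong comonoidal.\<close>
definition U_mon :: "'c \<Rightarrow> 'c \<Rightarrow> 'b" where
  "U_mon A B = cmp C (Um (tenm D (\<epsilon> A) (\<epsilon> B)))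
                 (cmp C (Um (F2 (Uo A) (Uo B))) (\<eta> (ten C (Uo A) (Uo B))))"

lemma U_mon_hom:
  assumes A: "A \<in> ob D" and B: "B \<in> ob D"
  shows "U_mon A B \<in> hom C (ten C (Uo A) (Uo B)) (Uo (ten D A B))"
proof -
  have x: "Uo A \<in> ob C" "Uo B \<in> ob C" using U_ob A B by auto
  have "\<eta> (ten C (Uo A) (Uo B)) \<in> hom C (ten C (Uo A) (Uo B)) (Uo (Fo (ten C (Uo A) (Uo B))))"
    using eta_hom C_ten x by blast
  moreover have "Um (F2 (Uo A) (Uo B))
      \<in> hom C (Uo (Fo (ten C (Uo A) (Uo B)))) (Uo (ten D (Fo (Uo A)) (Fo (Uo B))))"
    using U_hom F2_hom x by blast
  moreover have "Um (tenm D (\<epsilon> A) (\<epsilon> B)) \<in> hom C (Uo (ten D (Fo (Uo A)) (Fo (Uo B)))) (Uo (ten D A B))"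
    using U_hom sm_tenm[OF D_sm eps_hom[OF A] eps_hom[OF B]] by blast
  ultimately show ?thesis unfolding U_mon_def by (meson cat_comp cC)
qed

lemma U2_U_mon:
  assumes A: "A \<in> ob D" and B: "B \<in> ob D"
  shows "cmp C (U2 A B) (U_mon A B) = idt C (ten C (Uo A) (Uo B))"
proof -
  have x: "Uo A \<in> ob C" "Uo B \<in> ob C" using U_ob A B by auto
  have eA: "\<epsilon> A \<in> hom D (Fo (Uo A)) A" and eB: "\<epsilon> B \<in> hom D (Fo (Uo B)) B"
    using eps_hom A B by auto
  have eta: "\<eta> (ten C (Uo A) (Uo B)) \<in> hom C (ten C (Uo A) (Uo B)) (Uo (Fo (ten C (Uo A) (Uo B))))"
    using eta_hom C_ten x by blast
  have UF2: "Um (F2 (Uo A) (Uo B))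
      \<in> hom C (Uo (Fo (ten C (Uo A) (Uo B)))) (Uo (ten D (Fo (Uo A)) (Fo (Uo B))))"
    using U_hom F2_hom x by blast
  have Uee: "Um (tenm D (\<epsilon> A) (\<epsilon> B)) \<in> hom C (Uo (ten D (Fo (Uo A)) (Fo (Uo B)))) (Uo (ten D A B))"
    using U_hom sm_tenm[OF D_sm eA eB] by blast
  have U2': "U2 (Fo (Uo A)) (Fo (Uo B))
      \<in> hom C (Uo (ten D (Fo (Uo A)) (Fo (Uo B)))) (ten C (Uo (Fo (Uo A))) (Uo (Fo (Uo B))))"
    using U2_hom F_ob x by blast
  have UeA: "Um (\<epsilon> A) \<in> hom C (Uo (Fo (Uo A))) (Uo A)" using U_hom eA .
  have UeB: "Um (\<epsilon> B) \<in> hom C (Uo (Fo (Uo B))) (Uo B)" using U_hom eB .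
  have first: "cmp C (Um (F2 (Uo A) (Uo B))) (\<eta> (ten C (Uo A) (Uo B)))
      \<in> hom C (ten C (Uo A) (Uo B)) (Uo (ten D (Fo (Uo A)) (Fo (Uo B))))"
    using cat_comp[OF cC eta UF2] .
  have "cmp C (U2 A B) (U_mon A B)
      = cmp C (cmp C (U2 A B) (Um (tenm D (\<epsilon> A) (\<epsilon> B))))
              (cmp C (Um (F2 (Uo A) (Uo B))) (\<eta> (ten C (Uo A) (Uo B))))"
    unfolding U_mon_def using cat_assoc[OF cC first Uee U2_hom[OF A B]] .
  also have "\<dots> = cmp C (tenm C (Um (\<epsilon> A)) (Um (\<epsilon> B)))
       (cmp C (cmp C (U2 (Fo (Uo A)) (Fo (Uo B))) (Um (F2 (Uo A) (Uo B)))) (\<eta> (ten C (Uo A) (Uo B))))"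
    using U2_nat[OF eA eB] cat_assoc[OF cC first U2' sm_tenm[OF C_sm UeA UeB]]
      cat_assoc[OF cC eta UF2 U2'] by simp
  also have "\<dots> = cmp C (tenm C (Um (\<epsilon> A)) (Um (\<epsilon> B))) (tenm C (\<eta> (Uo A)) (\<eta> (Uo B)))"
    using eta_tensor[OF x] by simp
  also have "\<dots> = tenm C (cmp C (Um (\<epsilon> A)) (\<eta> (Uo A))) (cmp C (Um (\<epsilon> B)) (\<eta> (Uo B)))"
    using sm_inter[OF C_sm eta_hom[OF x(1)] UeA eta_hom[OF x(2)] UeB] by simp
  also have "\<dots> = idt C (ten C (Uo A) (Uo B))"
    using triangle_U[OF A] triangle_U[OF B] sm_ten_id[OF C_sm x] by simp
  finally show ?thesis .
qed

lemma U_mon_U2: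
  assumes A: "A \<in> ob D" and B: "B \<in> ob D"
  shows "cmp C (U_mon A B) (U2 A B) = idt C (Uo (ten D A B))"
proof -
  have x: "Uo A \<in> ob C" "Uo B \<in> ob C" using U_ob A B by auto
  have AB: "ten D A B \<in> ob D" using D_ten A B .
  have eta: "\<eta> (ten C (Uo A) (Uo B)) \<in> hom C (ten C (Uo A) (Uo B)) (Uo (Fo (ten C (Uo A) (Uo B))))"
    using eta_hom C_ten x by blast
  have F2': "F2 (Uo A) (Uo B) \<in> hom D (Fo (ten C (Uo A) (Uo B))) (ten D (Fo (Uo A)) (Fo (Uo B)))"
    using F2_hom x by blast
  have ee: "tenm D (\<epsilon> A) (\<epsilon> B) \<in> hom D (ten D (Fo (Uo A)) (Fo (Uo B))) (ten D A B)"
    using sm_tenm[OF D_sm eps_hom[OF A] eps_hom[OF B]] .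
  have u: "U2 A B \<in> hom C (Uo (ten D A B)) (ten C (Uo A) (Uo B))" using U2_hom A B .
  have FU2: "Fm (U2 A B) \<in> hom D (Fo (Uo (ten D A B))) (Fo (ten C (Uo A) (Uo B)))"
    using F_hom u .
  have last: "cmp C (Um (tenm D (\<epsilon> A) (\<epsilon> B))) (Um (F2 (Uo A) (Uo B)))
      \<in> hom C (Uo (Fo (ten C (Uo A) (Uo B)))) (Uo (ten D A B))"
    using cat_comp[OF cC U_hom[OF F2'] U_hom[OF ee]] .
  have "cmp C (U_mon A B) (U2 A B)
      = cmp C (cmp C (Um (tenm D (\<epsilon> A) (\<epsilon> B))) (Um (F2 (Uo A) (Uo B))))
          (cmp C (\<eta> (ten C (Uo A) (Uo B))) (U2 A B))"
    unfolding U_mon_def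
    using cat_assoc[OF cC eta U_hom[OF F2'] U_hom[OF ee]] cat_assoc[OF cC u eta last] by simp
  also have "\<dots> = cmp C (cmp C (cmp C (Um (tenm D (\<epsilon> A) (\<epsilon> B))) (Um (F2 (Uo A) (Uo B))))
          (Um (Fm (U2 A B)))) (\<eta> (Uo (ten D A B)))"
    using eta_nat[OF u] cat_assoc[OF cC eta_hom[OF U_ob[OF AB]] U_hom[OF FU2] last] by simp
  also have "\<dots> = cmp C (Um (cmp D (tenm D (\<epsilon> A) (\<epsilon> B)) (cmp D (F2 (Uo A) (Uo B)) (Fm (U2 A B)))))
          (\<eta> (Uo (ten D A B)))"
    using fun_comp[OF U_fun F2' ee] fun_comp[OF U_fun FU2 cat_comp[OF cD F2' ee]]
      cat_assoc[OF cD FU2 F2' ee] by simp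
  also have "\<dots> = idt C (Uo (ten D A B))"
    using eps_tensor[OF A B] triangle_U[OF AB] by simp
  finally show ?thesis .
qed

lemma mon_str_eq: "A \<in> ob D \<Longrightarrow> B \<in> ob D \<Longrightarrow> mon_str C D Uo U2 A B = U_mon A B"
  unfolding mon_str_def
  by (rule inverse_arr_eq[OF cC U2_hom U_mon_hom U_mon_U2 U2_U_mon])

definition hopf_l :: "'a \<Rightarrow> 'c \<Rightarrow> 'd" where
  "hopf_l c d = cmp D (tenm D (idt D (Fo c)) (\<epsilon> d)) (F2 c (Uo d))"

lemma hopf_l_hom:
  "c \<in> ob C \<Longrightarrow> d \<in> ob D \<Longrightarrow> hopf_l c d \<in> hom D (Fo (ten C c (Uo d))) (ten D (Fo c) d)"
  unfolding hopf_l_def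
  by (rule cat_comp[OF cD F2_hom sm_tenm[OF D_sm cat_id[OF cD] eps_hom]]) (auto intro: F_ob U_ob)

lemma left_hopf_iff:
  "left_hopf C D Fo F2 Uo \<epsilon> \<longleftrightarrow> (\<forall>c\<in>ob C. \<forall>d\<in>ob D. iso_in D (Fo (ten C c (Uo d))) (ten D (Fo c) d) (hopf_l c d))"
  unfolding left_hopf_def hopf_l_def ..

text \<open>The first lemma rewrites the D-side using naturality of F2, the second moves it to C.\<close>
lemma hopf_precomp:
  assumes c: "c \<in> ob C" and d: "d \<in> ob D" and I: "I \<in> ob D"
    and ev: "ev \<in> hom D (ten D I d) e" and g: "g \<in> hom C c (Uo I)"
  shows "cmp D (cmp D ev (tenm D (cmp D (\<epsilon> I) (Fm g)) (idt D d))) (hopf_l c d)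
       = cmp D (cmp D (cmp D ev (tenm D (\<epsilon> I) (\<epsilon> d))) (F2 (Uo I) (Uo d)))
           (Fm (tenm C g (idt C (Uo d))))"
proof -
  have x: "Uo d \<in> ob C" "Uo I \<in> ob C" using U_ob d I by auto
  have eI: "\<epsilon> I \<in> hom D (Fo (Uo I)) I" using eps_hom I .
  have ed: "\<epsilon> d \<in> hom D (Fo (Uo d)) d" using eps_hom d .
  have Fg: "Fm g \<in> hom D (Fo c) (Fo (Uo I))" using F_hom g .
  have tr: "cmp D (\<epsilon> I) (Fm g) \<in> hom D (Fo c) I" using cat_comp[OF cD Fg eI] .
  have ee: "tenm D (\<epsilon> I) (\<epsilon> d) \<in> hom D (ten D (Fo (Uo I)) (Fo (Uo d))) (ten D I d)"
    using sm_tenm[OF D_sm eI ed] .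
  have F2I: "F2 (Uo I) (Uo d) \<in> hom D (Fo (ten C (Uo I) (Uo d))) (ten D (Fo (Uo I)) (Fo (Uo d)))"
    using F2_hom x by blast
  have F2c: "F2 c (Uo d) \<in> hom D (Fo (ten C c (Uo d))) (ten D (Fo c) (Fo (Uo d)))"
    using F2_hom c x by blast
  have idFc: "idt D (Fo c) \<in> hom D (Fo c) (Fo c)" using cat_id[OF cD F_ob[OF c]] .
  have idd: "idt D d \<in> hom D d d" using cat_id[OF cD d] .
  have idFUd: "idt D (Fo (Uo d)) \<in> hom D (Fo (Uo d)) (Fo (Uo d))" using cat_id[OF cD F_ob[OF x(1)]] .
  have idUd: "idt C (Uo d) \<in> hom C (Uo d) (Uo d)" using cat_id[OF cC x(1)] .
  have Fgid: "Fm (tenm C g (idt C (Uo d))) \<in> hom D (Fo (ten C c (Uo d))) (Fo (ten C (Uo I) (Uo d)))"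
    using F_hom sm_tenm[OF C_sm g idUd] .
  have trd: "tenm D (cmp D (\<epsilon> I) (Fm g)) (idt D d) \<in> hom D (ten D (Fo c) d) (ten D I d)"
    using sm_tenm[OF D_sm tr idd] .
  have "cmp D (tenm D (cmp D (\<epsilon> I) (Fm g)) (idt D d)) (hopf_l c d)
      = cmp D (cmp D (tenm D (cmp D (\<epsilon> I) (Fm g)) (idt D d)) (tenm D (idt D (Fo c)) (\<epsilon> d)))
          (F2 c (Uo d))"
    unfolding hopf_l_def using cat_assoc[OF cD F2c sm_tenm[OF D_sm idFc ed] trd] .
  also have "cmp D (tenm D (cmp D (\<epsilon> I) (Fm g)) (idt D d)) (tenm D (idt D (Fo c)) (\<epsilon> d))
      = cmp D (tenm D (\<epsilon> I) (\<epsilon> d)) (tenm D (Fm g) (idt D (Fo (Uo d))))"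
    using sm_inter[OF D_sm idFc tr ed idd] sm_inter[OF D_sm Fg eI idFUd ed]
      cat_idr[OF cD tr] cat_idl[OF cD ed] cat_idr[OF cD ed] by simp
  also have "cmp D (cmp D (tenm D (\<epsilon> I) (\<epsilon> d)) (tenm D (Fm g) (idt D (Fo (Uo d))))) (F2 c (Uo d))
      = cmp D (tenm D (\<epsilon> I) (\<epsilon> d)) (cmp D (F2 (Uo I) (Uo d)) (Fm (tenm C g (idt C (Uo d)))))"
    using cat_assoc[OF cD F2c sm_tenm[OF D_sm Fg idFUd] ee] fun_id[OF F_fun x(1)]
      F2_nat[OF g idUd] by simp
  finally have "cmp D (tenm D (cmp D (\<epsilon> I) (Fm g)) (idt D d)) (hopf_l c d)
      = cmp D (tenm D (\<epsilon> I) (\<epsilon> d)) (cmp D (F2 (Uo I) (Uo d)) (Fm (tenm C g (idt C (Uo d)))))" .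
  then show ?thesis
    using cat_assoc[OF cD hopf_l_hom[OF c d] trd ev] cat_assoc[OF cD Fgid F2I ee]
      cat_assoc[OF cD Fgid cat_comp[OF cD F2I ee] ev] cat_assoc[OF cD F2I ee ev] by simp
qed

lemma unit_transpose_tensor:
  assumes c: "c \<in> ob C" and d: "d \<in> ob D" and I: "I \<in> ob D"
    and ev: "ev \<in> hom D (ten D I d) e" and g: "g \<in> hom C c (Uo I)"
  shows "cmp C (Um (cmp D (cmp D (cmp D ev (tenm D (\<epsilon> I) (\<epsilon> d))) (F2 (Uo I) (Uo d)))
           (Fm (tenm C g (idt C (Uo d)))))) (\<eta> (ten C c (Uo d)))
       = cmp C (cmp C (Um ev) (U_mon I d)) (tenm C g (idt C (Uo d)))"
proof -
  have x: "Uo d \<in> ob C" "Uo I \<in> ob C" using U_ob d I by auto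
  have ee: "tenm D (\<epsilon> I) (\<epsilon> d) \<in> hom D (ten D (Fo (Uo I)) (Fo (Uo d))) (ten D I d)"
    using sm_tenm[OF D_sm eps_hom[OF I] eps_hom[OF d]] .
  have F2I: "F2 (Uo I) (Uo d) \<in> hom D (Fo (ten C (Uo I) (Uo d))) (ten D (Fo (Uo I)) (Fo (Uo d)))"
    using F2_hom x by blast
  have gid: "tenm C g (idt C (Uo d)) \<in> hom C (ten C c (Uo d)) (ten C (Uo I) (Uo d))"
    using sm_tenm[OF C_sm g cat_id[OF cC x(1)]] .
  have Fgid: "Fm (tenm C g (idt C (Uo d))) \<in> hom D (Fo (ten C c (Uo d))) (Fo (ten C (Uo I) (Uo d)))"
    using F_hom gid .
  have evee: "cmp D ev (tenm D (\<epsilon> I) (\<epsilon> d)) \<in> hom D (ten D (Fo (Uo I)) (Fo (Uo d))) e"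
    using cat_comp[OF cD ee ev] .
  define W where "W = cmp D (cmp D ev (tenm D (\<epsilon> I) (\<epsilon> d))) (F2 (Uo I) (Uo d))"
  have W: "W \<in> hom D (Fo (ten C (Uo I) (Uo d))) e" unfolding W_def using cat_comp[OF cD F2I evee] .
  have UW: "Um W = cmp C (Um ev) (cmp C (Um (tenm D (\<epsilon> I) (\<epsilon> d))) (Um (F2 (Uo I) (Uo d))))"
    unfolding W_def using fun_comp[OF U_fun F2I evee] fun_comp[OF U_fun ee ev]
      cat_assoc[OF cC U_hom[OF F2I] U_hom[OF ee] U_hom[OF ev]] by simp
  have eta_c: "\<eta> (ten C c (Uo d)) \<in> hom C (ten C c (Uo d)) (Uo (Fo (ten C c (Uo d))))"
    using eta_hom C_ten c x by blast
  have eta_I: "\<eta> (ten C (Uo I) (Uo d)) \<in> hom C (ten C (Uo I) (Uo d)) (Uo (Fo (ten C (Uo I) (Uo d))))"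
    using eta_hom C_ten x by blast
  have "cmp C (Um (cmp D W (Fm (tenm C g (idt C (Uo d)))))) (\<eta> (ten C c (Uo d)))
      = cmp C (Um W) (cmp C (\<eta> (ten C (Uo I) (Uo d))) (tenm C g (idt C (Uo d))))"
    using fun_comp[OF U_fun Fgid W] cat_assoc[OF cC eta_c U_hom[OF Fgid] U_hom[OF W]]
      eta_nat[OF gid] by simp
  also have "\<dots> = cmp C (cmp C (Um W) (\<eta> (ten C (Uo I) (Uo d)))) (tenm C g (idt C (Uo d)))"
    using cat_assoc[OF cC gid eta_I U_hom[OF W]] by simp
  also have "cmp C (Um W) (\<eta> (ten C (Uo I) (Uo d))) = cmp C (Um ev) (U_mon I d)"
    unfolding UW U_mon_def
    using cat_assoc[OF cC eta_I U_hom[OF F2I] U_hom[OF ee]]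
      cat_assoc[OF cC eta_I cat_comp[OF cC U_hom[OF F2I] U_hom[OF ee]] U_hom[OF ev]]
      cat_assoc[OF cC cat_comp[OF cC eta_I U_hom[OF F2I]] U_hom[OF ee] U_hom[OF ev]] by simp
  finally show ?thesis unfolding W_def .
qed

lemma hopf_transpose:
  assumes "c \<in> ob C" "d \<in> ob D" "I \<in> ob D" "ev \<in> hom D (ten D I d) e" "g \<in> hom C c (Uo I)"
  shows "cmp C (Um (cmp D (cmp D ev (tenm D (cmp D (\<epsilon> I) (Fm g)) (idt D d))) (hopf_l c d)))
            (\<eta> (ten C c (Uo d)))
       = cmp C (cmp C (Um ev) (U_mon I d)) (tenm C g (idt C (Uo d)))"
  using hopf_precomp[OF assms] unit_transpose_tensor[OF assms] by simp

end

locale comonoidal_adj_left_closed = comonoidal_adj +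
  fixes ihC evC ihD evD
  assumes lcC: "left_closed C ihC evC" and lcD: "left_closed D ihD evD"
begin

lemma ihD_ob: "X \<in> ob D \<Longrightarrow> Y \<in> ob D \<Longrightarrow> ihD X Y \<in> ob D"
  using lcD unfolding left_closed_def by blast
lemma evD_hom: "X \<in> ob D \<Longrightarrow> Y \<in> ob D \<Longrightarrow> evD X Y \<in> hom D (ten D (ihD X Y) X) Y"
  using lcD unfolding left_closed_def by blast

definition kap :: "'c \<Rightarrow> 'c \<Rightarrow> 'b" where
  "kap X Y = (THE g. g \<in> hom C (Uo (ihD X Y)) (ihC (Uo X) (Uo Y)) \<and>
             cmp C (evC (Uo X) (Uo Y)) (tenm C g (idt C (Uo X))) =
             cmp C (Um (evD X Y)) (mon_str C D Uo U2 (ihD X Y) X))"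

lemma left_closed_functor_iff: "left_closed_functor C D Uo Um U2 ihC evC ihD evD \<longleftrightarrow>
   (\<forall>X\<in>ob D. \<forall>Y\<in>ob D. iso_in C (Uo (ihD X Y)) (ihC (Uo X) (Uo Y)) (kap X Y))"
  unfolding left_closed_functor_def kap_def ..

lemma kap_hom: "X \<in> ob D \<Longrightarrow> Y \<in> ob D \<Longrightarrow> kap X Y \<in> hom C (Uo (ihD X Y)) (ihC (Uo X) (Uo Y))"
  and kap_eq: "X \<in> ob D \<Longrightarrow> Y \<in> ob D \<Longrightarrow>
         cmp C (evC (Uo X) (Uo Y)) (tenm C (kap X Y) (idt C (Uo X))) =
         cmp C (Um (evD X Y)) (U_mon (ihD X Y) X)"
proof -
  assume X: "X \<in> ob D" and Y: "Y \<in> ob D"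
  have I: "ihD X Y \<in> ob D" using ihD_ob X Y .
  have "cmp C (Um (evD X Y)) (U_mon (ihD X Y) X) \<in> hom C (ten C (Uo (ihD X Y)) (Uo X)) (Uo Y)"
    using cat_comp[OF cC U_mon_hom[OF I X] U_hom[OF evD_hom[OF X Y]]] .
  then have "\<exists>!g. g \<in> hom C (Uo (ihD X Y)) (ihC (Uo X) (Uo Y)) \<and>
             cmp C (evC (Uo X) (Uo Y)) (tenm C g (idt C (Uo X))) =
             cmp C (Um (evD X Y)) (U_mon (ihD X Y) X)"
    using lcC U_ob[OF I] U_ob[OF X] U_ob[OF Y] unfolding left_closed_def by blast
  from theI'[OF this] show "kap X Y \<in> hom C (Uo (ihD X Y)) (ihC (Uo X) (Uo Y))"
    and "cmp C (evC (Uo X) (Uo Y)) (tenm C (kap X Y) (idt C (Uo X))) =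
         cmp C (Um (evD X Y)) (U_mon (ihD X Y) X)"
    unfolding kap_def mon_str_eq[OF I X] by auto
qed

lemma kap_transpose:
  assumes c: "c \<in> ob C" and d: "d \<in> ob D" and e: "e \<in> ob D"
    and g: "g \<in> hom C c (Uo (ihD d e))"
  shows "cmp C (evC (Uo d) (Uo e)) (tenm C (cmp C (kap d e) g) (idt C (Uo d)))
       = cmp C (Um (cmp D (cmp D (evD d e) (tenm D (cmp D (\<epsilon> (ihD d e)) (Fm g)) (idt D d)))
                         (hopf_l c d)))
           (\<eta> (ten C c (Uo d)))"
proof -
  have idUd: "idt C (Uo d) \<in> hom C (Uo d) (Uo d)" using cat_id[OF cC U_ob[OF d]] .
  have evC: "evC (Uo d) (Uo e) \<in> hom C (ten C (ihC (Uo d) (Uo e)) (Uo d)) (Uo e)"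
    using lcC U_ob[OF d] U_ob[OF e] unfolding left_closed_def by blast
  have "cmp C (evC (Uo d) (Uo e)) (tenm C (cmp C (kap d e) g) (idt C (Uo d)))
      = cmp C (cmp C (evC (Uo d) (Uo e)) (tenm C (kap d e) (idt C (Uo d))))
          (tenm C g (idt C (Uo d)))"
    using sm_inter[OF C_sm g kap_hom[OF d e] idUd idUd] cat_idl[OF cC idUd]
      cat_assoc[OF cC sm_tenm[OF C_sm g idUd] sm_tenm[OF C_sm kap_hom[OF d e] idUd] evC] by simp
  also have "\<dots> = cmp C (cmp C (Um (evD d e)) (U_mon (ihD d e) d)) (tenm C g (idt C (Uo d)))"
    using kap_eq[OF d e] by simp
  finally show ?thesis
    using hopf_transpose[OF c d ihD_ob[OF d e] evD_hom[OF d e] g] by simp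
qed

text \<open>The heart of the proof: for fixed c, d, e, postcomposition with kap d e is bijective
  iff precomposition with the Hopf operator is, since both are conjugate by bijections.\<close>
lemma kap_bij_iff_hopf_bij:
  assumes c: "c \<in> ob C" and d: "d \<in> ob D" and e: "e \<in> ob D"
  shows "bij_betw (\<lambda>g. cmp C (kap d e) g) (hom C c (Uo (ihD d e))) (hom C c (ihC (Uo d) (Uo e)))
     \<longleftrightarrow> bij_betw (\<lambda>k. cmp D k (hopf_l c d)) (hom D (ten D (Fo c) d) e)
           (hom D (Fo (ten C c (Uo d))) e)"
proof -
  let ?post = "\<lambda>g. cmp C (kap d e) g"
  let ?pre = "\<lambda>k. cmp D k (hopf_l c d)"
  let ?closedC = "\<lambda>g. cmp C (evC (Uo d) (Uo e)) (tenm C g (idt C (Uo d)))"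
  let ?closedD = "\<lambda>k. cmp D (evD d e) (tenm D k (idt D d))"
  let ?adjC = "\<lambda>h. cmp C (Um h) (\<eta> (ten C c (Uo d)))"
  let ?adjD = "\<lambda>g. cmp D (\<epsilon> (ihD d e)) (Fm g)"
  have closedC: "bij_betw ?closedC (hom C c (ihC (Uo d) (Uo e))) (hom C (ten C c (Uo d)) (Uo e))"
    using left_closed_bij[OF C_sm lcC c U_ob[OF d] U_ob[OF e]] .
  have adjC: "bij_betw ?adjC (hom D (Fo (ten C c (Uo d))) e) (hom C (ten C c (Uo d)) (Uo e))"
    using transpose_bij(2)[OF C_ten[OF c U_ob[OF d]] e] .
  have both_D: "bij_betw (?closedD \<circ> ?adjD) (hom C c (Uo (ihD d e))) (hom D (ten D (Fo c) d) e)"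
    using bij_betw_trans[OF transpose_bij(1)[OF c ihD_ob[OF d e]]
        left_closed_bij[OF D_sm lcD F_ob[OF c] d e]] .
  have post_img: "?post ` hom C c (Uo (ihD d e)) \<subseteq> hom C c (ihC (Uo d) (Uo e))"
    using kap_hom[OF d e] cat_comp[OF cC] by blast
  have pre_img: "?pre ` hom D (ten D (Fo c) d) e \<subseteq> hom D (Fo (ten C c (Uo d))) e"
    using hopf_l_hom[OF c d] cat_comp[OF cD] by blast
  have conj: "\<And>g. g \<in> hom C c (Uo (ihD d e)) \<Longrightarrow>
      (?closedC \<circ> ?post) g = (?adjC \<circ> ?pre \<circ> (?closedD \<circ> ?adjD)) g"
    using kap_transpose[OF c d e] by simp
  have "bij_betw ?post (hom C c (Uo (ihD d e))) (hom C c (ihC (Uo d) (Uo e)))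
     \<longleftrightarrow> bij_betw (?closedC \<circ> ?post) (hom C c (Uo (ihD d e))) (hom C (ten C c (Uo d)) (Uo e))"
    using bij_betw_comp_iff2[OF closedC post_img] .
  also have "\<dots> \<longleftrightarrow> bij_betw (?adjC \<circ> ?pre \<circ> (?closedD \<circ> ?adjD))
      (hom C c (Uo (ihD d e))) (hom C (ten C c (Uo d)) (Uo e))"
    using bij_betw_cong[of "hom C c (Uo (ihD d e))", OF conj] .
  also have "\<dots> \<longleftrightarrow> bij_betw (?adjC \<circ> ?pre) (hom D (ten D (Fo c) d) e) (hom C (ten C c (Uo d)) (Uo e))"
    using bij_betw_comp_iff[OF both_D, of "?adjC \<circ> ?pre"] by (simp only: o_assoc)
  also have "\<dots> \<longleftrightarrow> bij_betw ?pre (hom D (ten D (Fo c) d) e) (hom D (Fo (ten C c (Uo d))) e)"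
    using bij_betw_comp_iff2[OF adjC pre_img] by simp
  finally show ?thesis .
qed

text \<open>The left case of the theorem, via the two Yoneda criteria.\<close>
theorem left_hopf_iff_left_closed_functor:
  "left_hopf C D Fo F2 Uo \<epsilon> \<longleftrightarrow> left_closed_functor C D Uo Um U2 ihC evC ihD evD"
proof -
  have "left_hopf C D Fo F2 Uo \<epsilon> \<longleftrightarrow> (\<forall>c\<in>ob C. \<forall>d\<in>ob D. \<forall>e\<in>ob D.
      bij_betw (\<lambda>k. cmp D k (hopf_l c d)) (hom D (ten D (Fo c) d) e) (hom D (Fo (ten C c (Uo d))) e))"
    unfolding left_hopf_iff using iso_pre[OF cD hopf_l_hom] by blast
  also have "\<dots> \<longleftrightarrow> (\<forall>c\<in>ob C. \<forall>d\<in>ob D. \<forall>e\<in>ob D.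
      bij_betw (\<lambda>g. cmp C (kap d e) g) (hom C c (Uo (ihD d e))) (hom C c (ihC (Uo d) (Uo e))))"
    using kap_bij_iff_hopf_bij by blast
  also have "\<dots> \<longleftrightarrow> (\<forall>X\<in>ob D. \<forall>Y\<in>ob D. iso_in C (Uo (ihD X Y)) (ihC (Uo X) (Uo Y)) (kap X Y))"
    using iso_post[OF cC kap_hom] by blast
  also have "\<dots> \<longleftrightarrow> left_closed_functor C D Uo Um U2 ihC evC ihD evD"
    using left_closed_functor_iff by simp
  finally show ?thesis .
qed

end

subsection \<open>The right case by reversing the tensor product\<close>

text \<open>The reversed monoidal category X^rev with a \<otimes>' b = b \<otimes> a.  Right closed structures,
  right Hopf operators and right closed functors on X are the left ones on X^rev.\<close>
definition revc :: "('o, 'm) mcat \<Rightarrow> ('o, 'm) mcat" where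
  "revc X = X\<lparr>ten := \<lambda>a b. ten X b a, tenm := \<lambda>f g. tenm X g f\<rparr>"

lemma revc_simps [simp]: "ob (revc X) = ob X" "hom (revc X) = hom X" "cmp (revc X) = cmp X"
  "idt (revc X) = idt X" "ten (revc X) a b = ten X b a" "tenm (revc X) f g = tenm X g f"
  "munit (revc X) = munit X"
  unfolding revc_def by simp_all

lemma revc_iso_in [simp]: "iso_in (revc X) = iso_in X"
  unfolding iso_in_def[abs_def] by simp
lemma revc_inverse_arr [simp]: "inverse_arr (revc X) = inverse_arr X"
  unfolding inverse_arr_def[abs_def] by simp

lemma strict_monoidal_revc: "strict_monoidal X \<Longrightarrow> strict_monoidal (revc X)"
  unfolding strict_monoidal_def category_def by (simp; elim conjE; intro conjI; blast)

lemma comonoidal_functor_revc: "comonoidal_functor X Y Fo Fm F2 F0 \<Longrightarrow>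
   comonoidal_functor (revc X) (revc Y) Fo Fm (\<lambda>x y. F2 y x) F0"
  unfolding comonoidal_functor_def functor_def by (simp; elim conjE; intro conjI; blast)

lemma comonoidal_adjunction_revc: "comonoidal_adjunction C D Fo Fm F2 F0 Uo Um U2 U0 \<eta> \<epsilon> \<Longrightarrow>
  comonoidal_adjunction (revc C) (revc D) Fo Fm (\<lambda>x y. F2 y x) F0 Uo Um (\<lambda>x y. U2 y x) U0 \<eta> \<epsilon>"
  unfolding comonoidal_adjunction_def comonoidal_nat_trans_def nat_trans_def
  by (auto simp: strict_monoidal_revc comonoidal_functor_revc)

lemma right_closed_revc: "right_closed X ih ev = left_closed (revc X) ih ev"
  unfolding right_closed_def left_closed_def by simp
lemma right_hopf_revc: "right_hopf C D Fo F2 Uo \<epsilon> = left_hopf (revc C) (revc D) Fo (\<lambda>x y. F2 y x) Uo \<epsilon>"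
  unfolding right_hopf_def left_hopf_def by simp
lemma right_closed_functor_revc: "right_closed_functor C D Uo Um U2 ihC evC ihD evD =
   left_closed_functor (revc C) (revc D) Uo Um (\<lambda>x y. U2 y x) ihC evC ihD evD"
  unfolding right_closed_functor_def left_closed_functor_def mon_str_def by simp

theorem mainTheorem5:
  fixes C :: "('a, 'b) mcat" and D :: "('c, 'd) mcat"
  assumes "comonoidal_adjunction C D Fo Fm F2 F0 Uo Um U2 U0 \<eta> \<epsilon>"
  shows "(left_closed C ihlC evlC \<and> left_closed D ihlD evlD \<longrightarrow>
            (left_hopf C D Fo F2 Uo \<epsilon> \<longleftrightarrow>
             left_closed_functor C D Uo Um U2 ihlC evlC ihlD evlD)) \<and>
         (right_closed C ihrC evrC \<and> right_closed D ihrD evrD \<longrightarrow>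
            (right_hopf C D Fo F2 Uo \<epsilon> \<longleftrightarrow>
             right_closed_functor C D Uo Um U2 ihrC evrC ihrD evrD))"
proof (intro conjI impI)
  assume "left_closed C ihlC evlC \<and> left_closed D ihlD evlD"
  then interpret comonoidal_adj_left_closed C D Fo Fm F2 F0 Uo Um U2 U0 \<eta> \<epsilon> ihlC evlC ihlD evlD
    using assms by unfold_locales auto
  show "left_hopf C D Fo F2 Uo \<epsilon> \<longleftrightarrow> left_closed_functor C D Uo Um U2 ihlC evlC ihlD evlD"
    by (rule left_hopf_iff_left_closed_functor)
next
  assume "right_closed C ihrC evrC \<and> right_closed D ihrD evrD"
  then interpret rev: comonoidal_adj_left_closed "revc C" "revc D" Fo Fm "\<lambda>x y. F2 y x" F0
      Uo Um "\<lambda>x y. U2 y x" U0 \<eta> \<epsilon> ihrC evrC ihrD evrD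
    using comonoidal_adjunction_revc[OF assms] by unfold_locales (auto simp: right_closed_revc)
  show "right_hopf C D Fo F2 Uo \<epsilon> \<longleftrightarrow> right_closed_functor C D Uo Um U2 ihrC evrC ihrD evrD"
    unfolding right_hopf_revc right_closed_functor_revc by (rule rev.left_hopf_iff_left_closed_functor)
qed

end
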